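(* There is a universal constant $c>0$ such that the following holds. Let $\mathcal N$ be a semi-norm on $\mathbb R^n$ and $\mathbf Z$ a random vector in $\mathbb R^n$ whose distribution is symmetric and log-concave. Then for every $t>0$, $\Pr\big(|\mathcal N(\mathbf Z)-\mathbb E[\mathcal N(\mathbf Z)]|>t\big)\le 2\exp\!\Big(-\frac{c}{\psi_n}\frac{t}{\mathbb E[\mathcal N(\mathbf Z)]}\Big).$
   Context: $\psi_n$ denotes the KLS constant in dimension $n$: the supremum, over all isotropic log-concave probability measures $\mu$ on $\mathbb R^n$, of the reciprocal of the Cheeger (isoperimetric) constant of $\mu$. *)

theory Defs
  imports "HOL-Probability.Probability"
begin

text \<open>Euclidean space R^n, for an explicit dimension n, is modelled as the
  product measurable space of extensional functions on the index set {..<n}.\<close>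

definition Rn :: "nat \<Rightarrow> (nat \<Rightarrow> real) measure" where
  "Rn n = (\<Pi>\<^sub>M i\<in>{..<n}. (borel :: real measure))"

definition vadd :: "nat \<Rightarrow> (nat \<Rightarrow> real) \<Rightarrow> (nat \<Rightarrow> real) \<Rightarrow> (nat \<Rightarrow> real)" where
  "vadd n x y = (\<lambda>i\<in>{..<n}. x i + y i)"

definition smul :: "nat \<Rightarrow> real \<Rightarrow> (nat \<Rightarrow> real) \<Rightarrow> (nat \<Rightarrow> real)" where
  "smul n a x = (\<lambda>i\<in>{..<n}. a * x i)"

definition edist :: "nat \<Rightarrow> (nat \<Rightarrow> real) \<Rightarrow> (nat \<Rightarrow> real) \<Rightarrow> real" where
  "edist n x y = sqrt (\<Sum>i<n. (x i - y i)\<^sup>2)"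

text \<open>Log-concave probability measure on R^n (Borell's definition, tested on compact sets).\<close>
definition log_concave :: "nat \<Rightarrow> (nat \<Rightarrow> real) measure \<Rightarrow> bool" where
  "log_concave n \<mu> \<longleftrightarrow> sets \<mu> = sets (Rn n) \<and> prob_space \<mu> \<and>
     (\<forall>A B l. compact A \<and> compact B \<and> A \<subseteq> space (Rn n) \<and> B \<subseteq> space (Rn n)
        \<and> 0 < l \<and> l < 1 \<longrightarrow>
        measure \<mu> {vadd n (smul n l a) (smul n (1 - l) b) | a b. a \<in> A \<and> b \<in> B}
          \<ge> measure \<mu> A powr l * measure \<mu> B powr (1 - l))"

definition isotropic :: "nat \<Rightarrow> (nat \<Rightarrow> real) measure \<Rightarrow> bool" where
  "isotropic n \<mu> \<longleftrightarrow>
     (\<forall>i<n. integrable \<mu> (\<lambda>x. x i) \<and> (\<integral>x. x i \<partial>\<mu>) = 0) \<and>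
     (\<forall>i<n. \<forall>j<n. integrable \<mu> (\<lambda>x. x i * x j) \<and>
        (\<integral>x. x i * x j \<partial>\<mu>) = (if i = j then 1 else 0))"

definition symmetric_measure :: "nat \<Rightarrow> (nat \<Rightarrow> real) measure \<Rightarrow> bool" where
  "symmetric_measure n \<mu> \<longleftrightarrow> distr \<mu> (Rn n) (smul n (-1)) = \<mu>"

definition seminorm_on :: "nat \<Rightarrow> ((nat \<Rightarrow> real) \<Rightarrow> real) \<Rightarrow> bool" where
  "seminorm_on n N \<longleftrightarrow>
     (\<forall>x\<in>space (Rn n). \<forall>y\<in>space (Rn n). N (vadd n x y) \<le> N x + N y) \<and>
     (\<forall>a. \<forall>x\<in>space (Rn n). N (smul n a x) = \<bar>a\<bar> * N x)"

definition enbhd :: "nat \<Rightarrow> (nat \<Rightarrow> real) set \<Rightarrow> real \<Rightarrow> (nat \<Rightarrow> real) set" where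
  "enbhd n A e = {x \<in> space (Rn n). \<exists>a\<in>A. edist n x a < e}"

definition boundary_measure :: "nat \<Rightarrow> (nat \<Rightarrow> real) measure \<Rightarrow> (nat \<Rightarrow> real) set \<Rightarrow> ereal" where
  "boundary_measure n \<mu> A =
     Liminf (at_right 0) (\<lambda>e. ereal ((measure \<mu> (enbhd n A e) - measure \<mu> A) / e))"

definition cheeger :: "nat \<Rightarrow> (nat \<Rightarrow> real) measure \<Rightarrow> ereal" where
  "cheeger n \<mu> = (INF A \<in> {A \<in> sets \<mu>. 0 < measure \<mu> A \<and> measure \<mu> A < 1}.
      boundary_measure n \<mu> A / ereal (min (measure \<mu> A) (1 - measure \<mu> A)))"

definition KLS :: "nat \<Rightarrow> ereal" where
  "KLS n = (SUP \<mu> \<in> {\<mu>. log_concave n \<mu> \<and> isotropic n \<mu>}. 1 / cheeger n \<mu>)"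

definition psi :: "nat \<Rightarrow> real" where
  "psi n = real_of_ereal (KLS n)"

end

theory Submission
  imports Defs
begin

(* Borell's lemma does all the work.  Let mu be log-concave and N a seminorm with mean E.  For
   S > 5 E and l = 8 E / (S + 3 E), every point l a + (1 - l) b with N a >= S and N b <= 3 E has
   N >= 5 E, so log-concavity and Markov's inequality (mu {N <= 3 E} >= 2/3, mu {N >= 5 E} <= 1/5)
   give mu {N >= S} <= 2 powr (- (S + 3 E) / (8 E)): N has exponential tails at scale E, uniformly
   in n.  The factor 1 / psi n can only weaken this, since psi n is bounded below by a universal
   constant: if an isotropic measure had Cheeger constant above 80, the half-spaces {x. +-x 0 <= s}
   would force exponential tails of rate 40 for x 0 around a median m, whence
   E (x 0 - m)^2 <= 1/2 < 1 + m^2.  If KLS n is infinite, or there is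
   no isotropic log-concave measure, then psi n = real_of_ereal (KLS n) = 0 and c / psi n = 0, so
   the bound is trivial. *)

section \<open>Cubes and seminorms in R^n\<close>

lemma space_Rn: "space (Rn n) = PiE {..<n} (\<lambda>_. UNIV)"
  by (simp add: Rn_def space_PiM)

lemma vadd_in_space_Rn [simp]: "vadd n x y \<in> space (Rn n)"
  by (simp add: space_Rn vadd_def)

lemma smul_in_space_Rn [simp]: "smul n a x \<in> space (Rn n)"
  by (simp add: space_Rn smul_def)

lemma restrict_in_space_Rn [simp]: "restrict x {..<n} \<in> space (Rn n)"
  by (simp add: space_Rn)

lemma restrict_space_Rn: "x \<in> space (Rn n) \<Longrightarrow> restrict x {..<n} = x"
  by (simp add: space_Rn extensional_restrict)

lemma measurable_component_Rn:
  assumes "sets M = sets (Rn n)" and "i < n"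
  shows "(\<lambda>x. x i) \<in> borel_measurable M"
  unfolding measurable_cong_sets[OF assms(1) refl] Rn_def
  using assms(2) by (intro measurable_component_singleton) auto

definition Rn_basis :: "nat \<Rightarrow> nat \<Rightarrow> nat \<Rightarrow> real" where
  "Rn_basis n i = (\<lambda>j\<in>{..<n}. if j = i then 1 else 0)"

definition Rn_cube :: "nat \<Rightarrow> real \<Rightarrow> (nat \<Rightarrow> real) set" where
  "Rn_cube n r = {x \<in> space (Rn n). \<forall>i<n. \<bar>x i\<bar> \<le> r}"

lemma Rn_cube_eq_PiE:
  "Rn_cube n r = PiE UNIV (\<lambda>i. if i < n then {-r..r} else {undefined})"
proof -
  have "x \<in> PiE UNIV (\<lambda>i. if i < n then {-r..r} else {undefined}) \<longleftrightarrow>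
      (\<forall>i. x i \<in> (if i < n then {-r..r} else {undefined}))" for x
    by (simp add: PiE_UNIV_domain Pi_iff)
  also have "\<dots> x \<longleftrightarrow> (\<forall>i. n \<le> i \<longrightarrow> x i = undefined) \<and> (\<forall>i<n. \<bar>x i\<bar> \<le> r)" for x
    by (metis abs_le_iff atLeastAtMost_iff minus_le_iff not_le singleton_iff)
  also have "\<dots> x \<longleftrightarrow> x \<in> Rn_cube n r" for x
    by (simp add: Rn_cube_def space_Rn PiE_iff extensional_def not_less)
  finally show ?thesis
    by blast
qed

lemma compact_Rn_cube: "compact (Rn_cube n r)"
proof -
  have "compactin (product_topology (\<lambda>_. euclidean) UNIV)
      (PiE UNIV (\<lambda>i. if i < n then {-r..r} else {undefined :: real}))"
    by (subst compactin_PiE) auto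
  then show ?thesis
    by (simp add: Rn_cube_eq_PiE euclidean_product_topology)
qed

lemma sets_Rn_cube: "Rn_cube n r \<in> sets (Rn n)"
proof -
  have "Rn_cube n r = (\<Inter>i<n. {x \<in> space (Rn n). \<bar>x i\<bar> \<le> r}) \<inter> space (Rn n)"
    by (auto simp: Rn_cube_def)
  also have "\<dots> \<in> sets (Rn n)"
    using measurable_component_Rn[OF refl] by measurable
  finally show ?thesis .
qed

lemma UN_Rn_cube: "(\<Union>i::nat. Rn_cube n (real i)) = space (Rn n)"
proof -
  have "\<exists>i::nat. \<forall>j<n. \<bar>x j\<bar> \<le> real i" for x :: "nat \<Rightarrow> real"
  proof -
    obtain i :: nat where "(\<Sum>j<n. \<bar>x j\<bar>) \<le> real i"
      using real_arch_simple by blast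
    moreover have "\<bar>x j\<bar> \<le> (\<Sum>j<n. \<bar>x j\<bar>)" if "j < n" for j
      using that by (intro member_le_sum) auto
    ultimately show ?thesis by (meson order_trans)
  qed
  then show ?thesis by (auto simp: Rn_cube_def)
qed

lemma incseq_Rn_cube: "incseq (\<lambda>i. Rn_cube n (real i))"
  by (force simp: incseq_def Rn_cube_def intro: order_trans)

context
  fixes n :: nat and N :: "(nat \<Rightarrow> real) \<Rightarrow> real"
  assumes seminorm: "seminorm_on n N"
begin

lemma seminorm_add_le:
  "x \<in> space (Rn n) \<Longrightarrow> y \<in> space (Rn n) \<Longrightarrow> N (vadd n x y) \<le> N x + N y"
  using seminorm unfolding seminorm_on_def by blast

lemma seminorm_smul: "x \<in> space (Rn n) \<Longrightarrow> N (smul n a x) = \<bar>a\<bar> * N x"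
  using seminorm unfolding seminorm_on_def by blast

lemma seminorm_zero: "N (\<lambda>i\<in>{..<n}. 0) = 0"
  using seminorm_smul[of "\<lambda>i\<in>{..<n}. 0" 0] by (simp add: smul_def space_Rn)

lemma seminorm_nonneg:
  assumes x: "x \<in> space (Rn n)"
  shows "0 \<le> N x"
proof -
  have "vadd n x (smul n (-1) x) = (\<lambda>i\<in>{..<n}. 0)"
    by (auto simp: vadd_def smul_def)
  then have "0 \<le> N x + N (smul n (-1) x)"
    using seminorm_add_le[OF x smul_in_space_Rn, of "-1" x] seminorm_zero by simp
  then show ?thesis
    using seminorm_smul[OF x, of "-1"] by simp
qed

lemma seminorm_le_sum_basis:
  assumes d: "d \<in> space (Rn n)"
  shows "N d \<le> (\<Sum>i<n. \<bar>d i\<bar> * N (Rn_basis n i))"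
proof -
  define part where "part k = (\<lambda>j\<in>{..<n}. if j < k then d j else 0)" for k
  have "N (part k) \<le> (\<Sum>i<k. \<bar>d i\<bar> * N (Rn_basis n i))" for k
  proof (induction k)
    case 0
    have "part 0 = (\<lambda>i\<in>{..<n}. 0)"
      by (simp add: part_def)
    then have "N (part 0) = 0"
      using seminorm_zero by (simp only:)
    then show ?case
      by simp
  next
    case (Suc k)
    have "part (Suc k) = vadd n (part k) (smul n (d k) (Rn_basis n k))"
      by (auto simp: part_def vadd_def smul_def Rn_basis_def less_Suc_eq)
    then have "N (part (Suc k)) \<le> N (part k) + N (smul n (d k) (Rn_basis n k))"
      by (metis seminorm_add_le smul_in_space_Rn part_def restrict_in_space_Rn)
    also have "N (smul n (d k) (Rn_basis n k)) = \<bar>d k\<bar> * N (Rn_basis n k)"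
      by (rule seminorm_smul) (simp add: Rn_basis_def)
    finally show ?case
      using Suc by simp
  qed
  moreover have "part n = d"
    using d by (auto simp: part_def space_Rn PiE_def extensional_def)
  ultimately show ?thesis
    by metis
qed

lemma seminorm_le_add_sum_basis:
  assumes x: "x \<in> space (Rn n)" and y: "y \<in> space (Rn n)"
  shows "N x \<le> N y + (\<Sum>i<n. \<bar>x i - y i\<bar> * N (Rn_basis n i))"
proof -
  let ?d = "vadd n x (smul n (-1) y)"
  have "vadd n y ?d = x"
    using x by (auto simp: vadd_def smul_def space_Rn PiE_def extensional_def)
  then have "N x \<le> N y + N ?d"
    using seminorm_add_le[OF y vadd_in_space_Rn] by metis
  also have "N ?d \<le> (\<Sum>i<n. \<bar>?d i\<bar> * N (Rn_basis n i))"
    by (rule seminorm_le_sum_basis) simp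
  also have "\<dots> = (\<Sum>i<n. \<bar>x i - y i\<bar> * N (Rn_basis n i))"
    by (rule sum.cong) (auto simp: vadd_def smul_def)
  finally show ?thesis
    by simp
qed

lemma continuous_on_seminorm: "continuous_on UNIV (\<lambda>x. N (restrict x {..<n}))"
proof -
  let ?g = "\<lambda>x. N (restrict x {..<n})"
  have "isCont ?g x" for x :: "nat \<Rightarrow> real"
  proof -
    have dist_le: "norm (?g y - ?g x) \<le> (\<Sum>i<n. \<bar>y i - x i\<bar> * N (Rn_basis n i))" for y
      using seminorm_le_add_sum_basis[of "restrict y {..<n}" "restrict x {..<n}"]
        seminorm_le_add_sum_basis[of "restrict x {..<n}" "restrict y {..<n}"]
      by (simp add: abs_minus_commute)
    have "isCont (\<lambda>y. y i) x" for i
      using continuous_on_product_coordinates[of i] continuous_on_eq_continuous_at[OF open_UNIV]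
      by blast
    then have "((\<lambda>y. y i) \<longlongrightarrow> x i) (at x)" for i
      by (simp add: isCont_def)
    then have "((\<lambda>y. \<Sum>i<n. \<bar>y i - x i\<bar> * N (Rn_basis n i))
        \<longlongrightarrow> (\<Sum>i<n. \<bar>x i - x i\<bar> * N (Rn_basis n i))) (at x)"
      by (intro tendsto_intros)
    then have "((\<lambda>y. \<Sum>i<n. \<bar>y i - x i\<bar> * N (Rn_basis n i)) \<longlongrightarrow> 0) (at x)"
      by simp
    then have "((\<lambda>y. ?g y - ?g x) \<longlongrightarrow> 0) (at x)"
      by (rule Lim_null_comparison[rotated]) (intro always_eventually allI dist_le)
    then show ?thesis
      by (simp add: isCont_def LIM_zero_iff)
  qed
  then show ?thesis
    by (simp add: continuous_on_eq_continuous_at)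
qed

lemma compact_seminorm_vimage_Int_Rn_cube:
  assumes "closed K"
  shows "compact ({x \<in> space (Rn n). N x \<in> K} \<inter> Rn_cube n r)"
proof -
  have "{x \<in> space (Rn n). N x \<in> K} \<inter> Rn_cube n r = Rn_cube n r \<inter> (\<lambda>x. N (restrict x {..<n})) -` K"
    by (auto simp: Rn_cube_def restrict_space_Rn)
  then show ?thesis
    using compact_Int_closed[OF compact_Rn_cube closed_vimage[OF assms continuous_on_seminorm]]
    by simp
qed

lemma seminorm_convex_comb_ge:
  assumes a: "a \<in> space (Rn n)" and b: "b \<in> space (Rn n)" and l: "0 \<le> l" "l \<le> 1"
    and "S \<le> N a" "N b \<le> T"
  shows "l * S - (1 - l) * T \<le> N (vadd n (smul n l a) (smul n (1 - l) b))"
proof -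
  let ?z = "vadd n (smul n l a) (smul n (1 - l) b)"
  have "smul n l a = vadd n ?z (smul n (l - 1) b)"
    by (auto simp: vadd_def smul_def algebra_simps)
  then have "N (smul n l a) \<le> N ?z + N (smul n (l - 1) b)"
    using seminorm_add_le[of ?z "smul n (l - 1) b"] by simp
  then have "l * N a - (1 - l) * N b \<le> N ?z"
    using seminorm_smul[OF a, of l] seminorm_smul[OF b, of "l - 1"] l by simp
  moreover have "l * S \<le> l * N a" "(1 - l) * N b \<le> (1 - l) * T"
    using assms by (auto intro: mult_left_mono)
  ultimately show ?thesis
    by linarith
qed

end

section \<open>Borell's lemma\<close>

lemma log_concave_prob_space: "log_concave n \<mu> \<Longrightarrow> prob_space \<mu>"
  by (simp add: log_concave_def)

lemma sets_log_concave: "log_concave n \<mu> \<Longrightarrow> sets \<mu> = sets (Rn n)"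
  by (simp add: log_concave_def)

lemma space_log_concave: "log_concave n \<mu> \<Longrightarrow> space \<mu> = space (Rn n)"
  using sets_eq_imp_space_eq sets_log_concave by blast

lemma log_concave_ineq:
  assumes "log_concave n \<mu>" and "compact A" "compact B" "A \<subseteq> space (Rn n)" "B \<subseteq> space (Rn n)"
    and "0 < l" "l < 1"
  shows "measure \<mu> A powr l * measure \<mu> B powr (1 - l) \<le>
    measure \<mu> {vadd n (smul n l a) (smul n (1 - l) b) | a b. a \<in> A \<and> b \<in> B}"
proof -
  have "\<forall>A B l. compact A \<and> compact B \<and> A \<subseteq> space (Rn n) \<and> B \<subseteq> space (Rn n) \<and> 0 < l \<and> l < 1 \<longrightarrow>
      measure \<mu> A powr l * measure \<mu> B powr (1 - l) \<le>
      measure \<mu> {vadd n (smul n l a) (smul n (1 - l) b) | a b. a \<in> A \<and> b \<in> B}"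
    using assms(1) unfolding log_concave_def by blast
  then show ?thesis
    using assms(2-7) by blast
qed

lemma log_concave_ineq_truncated:
  assumes lc: "log_concave n \<mu>" and l: "0 < l" "l < 1"
    and A: "A \<in> sets \<mu>" "\<And>r. compact (A \<inter> Rn_cube n r)"
    and B: "B \<in> sets \<mu>" "\<And>r. compact (B \<inter> Rn_cube n r)"
    and C: "C \<in> sets \<mu>" "\<And>a b. a \<in> A \<Longrightarrow> b \<in> B \<Longrightarrow> vadd n (smul n l a) (smul n (1 - l) b) \<in> C"
  shows "measure \<mu> A powr l * measure \<mu> B powr (1 - l) \<le> measure \<mu> C"
proof -
  interpret prob_space \<mu>
    using lc by (rule log_concave_prob_space)
  have truncation_tendsto: "(\<lambda>i. prob (S \<inter> Rn_cube n (real i))) \<longlonglongrightarrow> prob S"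
    if S: "S \<in> sets \<mu>" for S
  proof -
    have "(\<lambda>i. prob (S \<inter> Rn_cube n (real i))) \<longlonglongrightarrow> prob (\<Union>i. S \<inter> Rn_cube n (real i))"
      using S incseq_Rn_cube sets_Rn_cube sets_log_concave[OF lc]
      by (intro finite_Lim_measure_incseq) (auto simp: incseq_def)
    moreover have "(\<Union>i. S \<inter> Rn_cube n (real i)) = S"
      using sets.sets_into_space[OF S] UN_Rn_cube space_log_concave[OF lc] by blast
    ultimately show ?thesis
      by simp
  qed
  let ?A = "\<lambda>i. A \<inter> Rn_cube n (real i)" and ?B = "\<lambda>i. B \<inter> Rn_cube n (real i)"
  have "(\<lambda>i. prob (?A i) powr l * prob (?B i) powr (1 - l)) \<longlonglongrightarrow> prob A powr l * prob B powr (1 - l)"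
    using l by (intro tendsto_mult tendsto_powr' truncation_tendsto A B tendsto_const) auto
  moreover have "prob (?A i) powr l * prob (?B i) powr (1 - l) \<le> prob C" for i
  proof -
    have "?A i \<subseteq> space (Rn n)" "?B i \<subseteq> space (Rn n)"
      by (auto simp: Rn_cube_def)
    then have "prob (?A i) powr l * prob (?B i) powr (1 - l) \<le>
        prob {vadd n (smul n l a) (smul n (1 - l) b) | a b. a \<in> ?A i \<and> b \<in> ?B i}"
      using A(2) B(2) l by (intro log_concave_ineq[OF lc])
    also have "\<dots> \<le> prob C"
      using C by (intro finite_measure_mono) auto
    finally show ?thesis .
  qed
  ultimately show ?thesis
    by (intro tendsto_upperbound[OF _ always_eventually]) auto
qed

lemma le_half_powr_inverse_of_powr_product:
  fixes a b l :: real
  assumes "0 \<le> a" "1/2 \<le> b" "a powr l * b powr (1 - l) \<le> 1/4" "0 < l" "l < 1"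
  shows "a \<le> (1/2) powr (1 / l)"
proof -
  have "(1/2 :: real) = (1/2) powr 1"
    by simp
  also have "\<dots> \<le> (1/2) powr (1 - l)"
    using assms by (intro powr_mono') auto
  also have "\<dots> \<le> b powr (1 - l)"
    using assms by (intro powr_mono2) auto
  finally have "a powr l * (1/2) \<le> a powr l * b powr (1 - l)"
    by (intro mult_left_mono) auto
  then have "a powr l \<le> 1/2"
    using assms by linarith
  then have "(a powr l) powr (1 / l) \<le> (1/2) powr (1 / l)"
    using assms by (intro powr_mono2) auto
  then show ?thesis
    using assms by (simp add: powr_powr)
qed

lemma borell_seminorm_tail:
  assumes lc: "log_concave n \<mu>" and seminorm: "seminorm_on n N" and int: "integrable \<mu> N"
    and E: "E = (\<integral>x. N x \<partial>\<mu>)" "0 < E" and S: "5 * E < S"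
  shows "measure \<mu> {x \<in> space \<mu>. S \<le> N x} \<le> (1/2) powr ((S + 3 * E) / (8 * E))"
proof -
  interpret prob_space \<mu>
    using lc by (rule log_concave_prob_space)
  have [measurable]: "N \<in> borel_measurable \<mu>"
    using int by auto
  have space: "space \<mu> = space (Rn n)"
    using lc by (rule space_log_concave)
  have nonneg: "0 \<le> N x" if "x \<in> space \<mu>" for x
    using that seminorm_nonneg[OF seminorm] space by simp
  have markov: "prob {x \<in> space \<mu>. c \<le> N x} \<le> E / c" if "0 < c" for c
    unfolding E(1) using that nonneg
    by (intro integral_Markov_inequality_measure[OF int, of "space \<mu>"]) auto
  define l where "l = 8 * E / (S + 3 * E)"
  have l: "0 < l" "l < 1"
    using E S by (auto simp: l_def field_simps)
  have "l * (S + 3 * E) = 8 * E"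
    using E S by (simp add: l_def)
  then have l_comb: "l * S - (1 - l) * (3 * E) = 5 * E"
    unfolding left_diff_distrib distrib_left by linarith
  define A where "A = {x \<in> space \<mu>. S \<le> N x}"
  define B where "B = {x \<in> space \<mu>. N x \<le> 3 * E}"
  define C where "C = {x \<in> space \<mu>. 5 * E \<le> N x}"
  have "compact (A \<inter> Rn_cube n r)" "compact (B \<inter> Rn_cube n r)" for r
    using compact_seminorm_vimage_Int_Rn_cube[OF seminorm, of "{S..}" r]
      compact_seminorm_vimage_Int_Rn_cube[OF seminorm, of "{..3 * E}" r]
    by (simp_all add: A_def B_def space)
  moreover have "vadd n (smul n l a) (smul n (1 - l) b) \<in> C" if "a \<in> A" "b \<in> B" for a b
    using seminorm_convex_comb_ge[OF seminorm, of a b l S "3 * E"] that l l_comb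
    by (simp add: A_def B_def C_def space)
  ultimately have "prob A powr l * prob B powr (1 - l) \<le> prob C"
    using l by (intro log_concave_ineq_truncated[OF lc]) (auto simp: A_def B_def C_def)
  also have "prob C \<le> 1/4"
    using markov[of "5 * E"] E by (simp add: C_def)
  finally have product: "prob A powr l * prob B powr (1 - l) \<le> 1/4" .
  have "prob {x \<in> space \<mu>. 3 * E < N x} \<le> prob {x \<in> space \<mu>. 3 * E \<le> N x}"
    by (intro finite_measure_mono) auto
  also have "\<dots> \<le> 1/3"
    using markov[of "3 * E"] E by simp
  moreover have "B = space \<mu> - {x \<in> space \<mu>. 3 * E < N x}"
    by (auto simp: B_def)
  ultimately have "1/2 \<le> prob B"
    by (simp add: prob_compl)
  then have "prob A \<le> (1/2) powr (1 / l)"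
    using product l by (intro le_half_powr_inverse_of_powr_product) auto
  then show ?thesis
    using E S by (simp add: A_def l_def)
qed

lemma seminorm_upper_tail_exp:
  assumes lc: "log_concave n \<mu>" and seminorm: "seminorm_on n N" and int: "integrable \<mu> N"
    and E: "E = (\<integral>x. N x \<partial>\<mu>)" "0 < E" and t: "4 * E < t"
  shows "measure \<mu> {x \<in> space \<mu>. E + t \<le> N x} \<le> exp (- t / (16 * E))"
proof -
  have "measure \<mu> {x \<in> space \<mu>. E + t \<le> N x} \<le> (1/2) powr ((t + 4 * E) / (8 * E))"
    using borell_seminorm_tail[OF lc seminorm int E, of "E + t"] t by (simp add: add_ac)
  also have "\<dots> = exp (- ((t + 4 * E) / (8 * E)) * ln 2)"
    by (simp add: powr_def ln_div)
  also have "\<dots> \<le> exp (- t / (16 * E))"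
  proof -
    have "1/2 \<le> ln (2::real)"
      using exp_half_le2 ln_le_cancel_iff[of "exp (1/2)" 2] by simp
    then have "t / (8 * E) * (1/2) \<le> (t + 4 * E) / (8 * E) * ln 2"
      using E t by (intro mult_mono divide_right_mono) auto
    then show ?thesis
      by simp
  qed
  finally show ?thesis .
qed

lemma seminorm_deviation_tail:
  assumes lc: "log_concave n \<mu>" and seminorm: "seminorm_on n N" and t: "0 < t"
    and k: "0 \<le> k" "k \<le> 1/25"
  shows "measure \<mu> {x \<in> space \<mu>. \<bar>N x - (\<integral>y. N y \<partial>\<mu>)\<bar> > t}
    \<le> 2 * exp (- k * (t / (\<integral>y. N y \<partial>\<mu>)))"
proof -
  interpret prob_space \<mu>
    using lc by (rule log_concave_prob_space)
  define E where "E = (\<integral>y. N y \<partial>\<mu>)"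
  let ?L = "prob {x \<in> space \<mu>. \<bar>N x - E\<bar> > t}"
  have "?L \<le> 2 * exp (- k * (t / E))"
  proof (cases "0 < E \<and> 4 * E < t")
    case False
    then have "t / E \<le> 4"
      using t by (auto simp: divide_le_eq)
    then have "k * (t / E) \<le> k * 4"
      using k by (intro mult_left_mono) auto
    then have "1 - 4/25 \<le> exp (- k * (t / E))"
      using exp_ge_add_one_self[of "- k * (t / E)"] k by linarith
    then show ?thesis
      using prob_le_1[of "{x \<in> space \<mu>. \<bar>N x - E\<bar> > t}"] by linarith
  next
    case True
    have int: "integrable \<mu> N"
      using True not_integrable_integral_eq[of \<mu> N] unfolding E_def by (metis less_irrefl)
    then have [measurable]: "N \<in> borel_measurable \<mu>"
      by auto
    have "E + t \<le> N x" if "x \<in> space \<mu>" "t < \<bar>N x - E\<bar>" for x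
      using that True seminorm_nonneg[OF seminorm, of x] space_log_concave[OF lc]
      by (cases "E \<le> N x") auto
    then have "?L \<le> prob {x \<in> space \<mu>. E + t \<le> N x}"
      by (intro finite_measure_mono) auto
    also have "\<dots> \<le> exp (- t / (16 * E))"
      using seminorm_upper_tail_exp[OF lc seminorm int E_def] True by simp
    also have "\<dots> \<le> exp (- k * (t / E))"
    proof -
      have "k * (t / E) \<le> 1/16 * (t / E)"
        using True k t by (intro mult_right_mono) auto
      then show ?thesis
        by simp
    qed
    also have "\<dots> \<le> 2 * exp (- k * (t / E))"
      by simp
    finally show ?thesis .
  qed
  then show ?thesis
    by (simp add: E_def)
qed

section \<open>Exponential tails from isoperimetry of half-lines\<close>

lemma le_of_locally_antitone:
  fixes g :: "real \<Rightarrow> real"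
  assumes "a \<le> b"
    and local: "\<And>x. a \<le> x \<Longrightarrow> x \<le> b \<Longrightarrow>
      \<exists>d>0. \<forall>u v. a \<le> u \<and> u \<le> x \<and> x \<le> v \<and> v - u < d \<longrightarrow> g v \<le> g u"
  shows "g b \<le> g a"
proof -
  (* Bolzano's real induction also visits intervals reaching left of a, hence the clamping. *)
  define R where "R u v \<longleftrightarrow> g (max v a) \<le> g (max u a)" for u v
  have "R a b"
    using \<open>a \<le> b\<close>
  proof (induction rule: Bolzano)
    case (trans u v w)
    then show ?case
      by (simp add: R_def)
  next
    case (local x)
    then obtain d where "d > 0" and d: "\<forall>u v. a \<le> u \<and> u \<le> x \<and> x \<le> v \<and> v - u < d \<longrightarrow> g v \<le> g u"
      using assms(2) by blast
    have "R u v" if "u \<le> x" "x \<le> v" "v - u < d" for u v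
      using d[rule_format, of "max u a" v] that local by (simp add: R_def)
    then show ?case
      using \<open>d > 0\<close> by blast
  qed
  then show ?thesis
    using \<open>a \<le> b\<close> by (simp add: R_def)
qed

lemma exp_weighted_le_of_decay:
  fixes h \<beta> p q :: real
  assumes "0 < h" "0 \<le> \<beta>" "0 \<le> p" "q \<le> p * (1 - h * \<beta>)"
  shows "q * exp (h / 2 * (x + \<beta>)) \<le> p * exp (h / 2 * x)"
proof -
  have "(1 - h * \<beta>) * exp (h / 2 * \<beta>) \<le> exp (- (h * \<beta>)) * exp (h / 2 * \<beta>)"
    using exp_ge_add_one_self[of "- (h * \<beta>)"] by (intro mult_right_mono) auto
  also have "\<dots> \<le> 1"
    using assms by (simp add: exp_add[symmetric])
  finally have decay: "(1 - h * \<beta>) * exp (h / 2 * \<beta>) \<le> 1" .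
  have "q * exp (h / 2 * (x + \<beta>)) = q * exp (h / 2 * \<beta>) * exp (h / 2 * x)"
    by (simp add: distrib_left exp_add)
  also have "\<dots> \<le> p * ((1 - h * \<beta>) * exp (h / 2 * \<beta>)) * exp (h / 2 * x)"
    using assms(4) by (simp add: mult.assoc[symmetric] mult_right_mono)
  also have "\<dots> \<le> p * exp (h / 2 * x)"
    using decay assms(3) by (intro mult_right_mono mult_left_le) auto
  finally show ?thesis .
qed

lemma exp_weighted_le_of_growth:
  fixes h \<alpha> p q :: real
  assumes "0 < h" "0 \<le> \<alpha>" "h * \<alpha> \<le> 1" "0 \<le> p" "p * (1 + h * \<alpha>) \<le> q"
  shows "p * exp (h / 2 * x) \<le> q * exp (h / 2 * (x - \<alpha>))"
proof -
  have "exp (h / 2 * \<alpha>) \<le> 1 + h * \<alpha>"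
    using exp_bound_lemma[of "h / 2 * \<alpha>"] assms by simp
  have "p * exp (h / 2 * x) = p * exp (h / 2 * \<alpha> + h / 2 * (x - \<alpha>))"
    by (simp add: right_diff_distrib)
  also have "\<dots> = p * exp (h / 2 * \<alpha>) * exp (h / 2 * (x - \<alpha>))"
    by (simp add: exp_add)
  also have "\<dots> \<le> p * (1 + h * \<alpha>) * exp (h / 2 * (x - \<alpha>))"
    using \<open>exp (h / 2 * \<alpha>) \<le> 1 + h * \<alpha>\<close> assms by (intro mult_right_mono mult_left_mono) auto
  also have "\<dots> \<le> q * exp (h / 2 * (x - \<alpha>))"
    using assms(5) by (intro mult_right_mono) auto
  finally show ?thesis .
qed

context
  fixes P :: "real \<Rightarrow> real" and h a :: real
  assumes antitone: "\<And>s t. s \<le> t \<Longrightarrow> P t \<le> P s" and nonneg: "\<And>s. 0 \<le> P s" and h: "0 < h"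
    and right: "\<And>x. a \<le> x \<Longrightarrow> 0 < P x \<Longrightarrow> \<forall>\<^sub>F e in at_right 0. P (x + e) \<le> P x * (1 - h * e)"
    and left: "\<And>x. a \<le> x \<Longrightarrow> 0 < P x \<Longrightarrow> \<forall>\<^sub>F e in at_right 0. P x * (1 + h * e) \<le> P (x - e)"
begin

lemma exp_weighted_locally_antitone:
  assumes "a \<le> x"
  shows "\<exists>d>0. \<forall>u v. a \<le> u \<and> u \<le> x \<and> x \<le> v \<and> v - u < d \<longrightarrow>
    P v * exp (h / 2 * v) \<le> P u * exp (h / 2 * u)"
proof (cases "P x = 0")
  case True
  then have "P v = 0" if "x \<le> v" for v
    using antitone[OF that] nonneg[of v] by simp
  then show ?thesis
    using nonneg by (intro exI[of _ 1]) auto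
next
  case False
  then have "0 < P x"
    using nonneg[of x] by simp
  obtain d1 where "0 < d1" and d1: "\<And>e. 0 < e \<Longrightarrow> e < d1 \<Longrightarrow> P (x + e) \<le> P x * (1 - h * e)"
    using right[OF assms \<open>0 < P x\<close>] unfolding eventually_at_right_field by auto
  obtain d2 where "0 < d2" and d2: "\<And>e. 0 < e \<Longrightarrow> e < d2 \<Longrightarrow> P x * (1 + h * e) \<le> P (x - e)"
    using left[OF assms \<open>0 < P x\<close>] unfolding eventually_at_right_field by auto
  show ?thesis
  proof (intro exI[of _ "min d1 (min d2 (1 / h))"] conjI allI impI)
    show "0 < min d1 (min d2 (1 / h))"
      using \<open>0 < d1\<close> \<open>0 < d2\<close> h by simp
    fix u v
    assume uv: "a \<le> u \<and> u \<le> x \<and> x \<le> v \<and> v - u < min d1 (min d2 (1 / h))"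
    have "P v * exp (h / 2 * v) \<le> P x * exp (h / 2 * x)"
    proof (cases "v = x")
      case False
      then show ?thesis
        using exp_weighted_le_of_decay[OF h, of "v - x" "P x" "P v" x] d1[of "v - x"] uv nonneg
        by simp
    qed simp
    also have "\<dots> \<le> P u * exp (h / 2 * u)"
    proof (cases "u = x")
      case False
      have "h * (x - u) \<le> h * (v - u)"
        using uv h by (intro mult_left_mono) auto
      also have "\<dots> < 1"
        using uv h by (simp add: less_divide_eq mult.commute)
      finally have "h * (x - u) \<le> 1"
        by simp
      with False show ?thesis
        using exp_weighted_le_of_growth[OF h, of "x - u" "P x" "P u" x] d2[of "x - u"] uv nonneg
        by simp
    qed simp
    finally show "P v * exp (h / 2 * v) \<le> P u * exp (h / 2 * u)" .
  qed
qed

lemma exp_decay_of_local_decay: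
  assumes "a \<le> b"
  shows "P b * exp (h / 2 * (b - a)) \<le> P a"
proof -
  have "P b * exp (h / 2 * (b - a)) * exp (h / 2 * a) = P b * exp (h / 2 * b)"
    by (simp add: mult.assoc exp_add[symmetric] right_diff_distrib)
  also have "\<dots> \<le> P a * exp (h / 2 * a)"
    using assms exp_weighted_locally_antitone by (rule le_of_locally_antitone)
  finally show ?thesis
    by (rule mult_right_le_imp_le) simp
qed

end

lemma square_plus_two_le_four_pow: "(real j + 2)\<^sup>2 \<le> 4 * 4 ^ j"
proof (induction j)
  case (Suc j)
  have "(real (Suc j) + 2)\<^sup>2 \<le> 4 * (real j + 2)\<^sup>2"
    by (simp add: power2_eq_square algebra_simps)
  then show ?case
    using Suc by simp
qed simp

lemma layer_weight_le: "(real j + 2)\<^sup>2 / 4 * exp (- (40 * ((real j + 1) / 2 - 1/4))) \<le> exp (-10) * (1/2) ^ j"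
proof -
  have "exp (- (40 * ((real j + 1) / 2 - 1/4))) = exp (-10) * exp (-20) ^ j"
    by (simp add: field_simps exp_add[symmetric] exp_of_nat_mult[symmetric])
  also have "\<dots> \<le> exp (-10) * (1/8) ^ j"
    using exp_ge_add_one_self[of 20]
    by (intro mult_left_mono power_mono) (auto simp: exp_minus field_simps)
  finally have "(real j + 2)\<^sup>2 / 4 * exp (- (40 * ((real j + 1) / 2 - 1/4))) \<le> 4 ^ j * (exp (-10) * (1/8) ^ j)"
    using square_plus_two_le_four_pow[of j] by (intro mult_mono) auto
  also have "\<dots> = exp (-10) * (1/2) ^ j"
    by (simp add: power_divide field_simps flip: power_mult_distrib)
  finally show ?thesis .
qed

lemma square_le_layer_sum:
  assumes "0 \<le> (y::real)"
  shows "ennreal (y\<^sup>2) \<le>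
    ennreal (1/4) + (\<Sum>j. ennreal ((real j + 2)\<^sup>2 / 4) * indicator {z. (real j + 1) / 2 < z} y)"
proof (cases "y \<le> 1/2")
  case True
  then have "y\<^sup>2 \<le> (1/2)\<^sup>2"
    using assms by (intro power_mono) auto
  then show ?thesis
    by (intro add_increasing2) (auto simp: power2_eq_square)
next
  case False
  define c where "c = real_of_int \<lceil>2 * y\<rceil>"
  have c: "c - 1 < 2 * y" "2 * y \<le> c"
    using ceiling_correct[of "2 * y"] by (simp_all add: c_def)
  define j where "j = nat (\<lceil>2 * y\<rceil> - 2)"
  have j: "real j + 2 = c"
    using False by (simp add: j_def c_def)
  have "(real j + 1) / 2 < y"
    using j c by (simp add: field_simps)
  moreover have "y \<le> (real j + 2) / 2"
    using j c by (simp add: field_simps)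
  ultimately have "ennreal (y\<^sup>2) \<le> ennreal ((real j + 2)\<^sup>2 / 4) * indicator {z. (real j + 1) / 2 < z} y"
    using assms power_mono[of y "(real j + 2) / 2" 2] by (simp add: power_divide)
  also have "\<dots> \<le> (\<Sum>j. ennreal ((real j + 2)\<^sup>2 / 4) * indicator {z. (real j + 1) / 2 < z} y)"
    using ennreal_suminf_lessD not_le by blast
  also have "\<dots> \<le> ennreal (1/4) + \<dots>"
    by simp
  finally show ?thesis .
qed

lemma (in real_distribution) cdf_quantile_exists:
  assumes "0 < q" "q < 1"
  shows "\<exists>m. q \<le> cdf M m \<and> measure M {..<m} \<le> q"
proof -
  define S where "S = {s. q \<le> cdf M s}"
  obtain s0 where "q < cdf M s0"
    using order_tendstoD(1)[OF cdf_lim_at_top_prob assms(2)] by (auto dest: eventually_happens)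
  then have "S \<noteq> {}"
    by (auto simp: S_def intro: less_imp_le)
  obtain s1 where s1: "\<And>s. s \<le> s1 \<Longrightarrow> cdf M s < q"
    using order_tendstoD(2)[OF cdf_lim_at_bot assms(1)] by (auto simp: eventually_at_bot_linorder)
  have "s1 \<le> s" if "s \<in> S" for s
    using s1[of s] that by (force simp: S_def)
  then have "bdd_below S"
    by (rule bdd_belowI)
  define m where "m = Inf S"
  have "q \<le> cdf M m"
  proof (rule tendsto_lowerbound[OF cdf_is_right_cont[unfolded continuous_within]])
    show "\<forall>\<^sub>F s in at_right m. q \<le> cdf M s"
    proof (rule eventually_mono[OF eventually_at_right_less])
      fix s
      assume "m < s"
      then obtain s' where "s' \<in> S" "s' < s"
        using cInf_lessD[OF \<open>S \<noteq> {}\<close>] by (auto simp: m_def)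
      then show "q \<le> cdf M s"
        using cdf_nondecreasing[of s' s] by (simp add: S_def)
    qed
  qed simp
  moreover have "measure M {..<m} \<le> q"
  proof (rule tendsto_upperbound[OF cdf_at_left])
    have "\<forall>\<^sub>F s in at_left m. s < m"
      unfolding eventually_at_left_field by (intro exI[of _ "m - 1"]) auto
    then show "\<forall>\<^sub>F s in at_left m. cdf M s \<le> q"
    proof (rule eventually_mono)
      fix s
      assume "s < m"
      then have "s \<notin> S"
        using cInf_lower[OF _ \<open>bdd_below S\<close>] by (force simp: m_def)
      then show "cdf M s \<le> q"
        by (simp add: S_def)
    qed
  qed simp
  ultimately show ?thesis
    by blast
qed

(* The Cheeger inequality with constant h, tested only on the sublevel sets of f; when f is a
   coordinate these are half-spaces, and {f < s + e} is the e-neighbourhood of {f <= s}. *)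
definition halfline_expansion :: "'a measure \<Rightarrow> ('a \<Rightarrow> real) \<Rightarrow> real \<Rightarrow> bool" where
  "halfline_expansion M f h \<longleftrightarrow> (\<forall>s. let p = measure M {x \<in> space M. f x \<le> s} in
     0 < p \<and> p < 1 \<longrightarrow>
     (\<forall>\<^sub>F e in at_right 0. h * min p (1 - p) * e < measure M {x \<in> space M. f x < s + e} - p))"

context prob_space
begin

lemma halfline_expansion_upper_decay:
  assumes [measurable]: "f \<in> borel_measurable M" and expansion: "halfline_expansion M f h"
    and pos: "0 < prob {y \<in> space M. x < f y}" and half: "prob {y \<in> space M. x \<le> f y} \<le> 1/2"
  shows "\<forall>\<^sub>F e in at_right 0.
    prob {y \<in> space M. x + e < f y} \<le> prob {y \<in> space M. x < f y} * (1 - h * e)"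
proof -
  let ?P = "\<lambda>s. prob {y \<in> space M. s < f y}" and ?Q = "\<lambda>s. prob {y \<in> space M. s \<le> f y}"
  have le: "prob {y \<in> space M. f y \<le> x} = 1 - ?P x"
  proof -
    have "{y \<in> space M. f y \<le> x} = space M - {y \<in> space M. x < f y}"
      by auto
    then show ?thesis
      by (simp add: prob_compl)
  qed
  have lt: "prob {y \<in> space M. f y < x + e} = 1 - ?Q (x + e)" for e
  proof -
    have "{y \<in> space M. f y < x + e} = space M - {y \<in> space M. x + e \<le> f y}"
      by auto
    then show ?thesis
      by (simp add: prob_compl)
  qed
  have "?P x \<le> ?Q x"
    by (intro finite_measure_mono) auto
  then have "\<forall>\<^sub>F e in at_right 0. h * ?P x * e < ?P x - ?Q (x + e)"
    using expansion pos half unfolding halfline_expansion_def Let_def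
    by (auto simp: le lt dest!: spec[of _ x])
  then show ?thesis
  proof (rule eventually_mono)
    fix e
    assume "h * ?P x * e < ?P x - ?Q (x + e)"
    moreover have "?P (x + e) \<le> ?Q (x + e)"
      by (intro finite_measure_mono) auto
    moreover have "?P x * (1 - h * e) = ?P x - h * ?P x * e"
      by (simp add: algebra_simps)
    ultimately show "?P (x + e) \<le> ?P x * (1 - h * e)"
      by linarith
  qed
qed

lemma halfline_expansion_lower_growth:
  assumes [measurable]: "f \<in> borel_measurable M" and expansion: "halfline_expansion M (\<lambda>y. - f y) h"
    and h: "0 \<le> h"
    and pos: "0 < prob {y \<in> space M. x < f y}" and half: "prob {y \<in> space M. x \<le> f y} \<le> 1/2"
  shows "\<forall>\<^sub>F e in at_right 0.
    prob {y \<in> space M. x < f y} * (1 + h * e) \<le> prob {y \<in> space M. x - e < f y}"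
proof -
  let ?P = "\<lambda>s. prob {y \<in> space M. s < f y}" and ?Q = "\<lambda>s. prob {y \<in> space M. s \<le> f y}"
  have le: "prob {y \<in> space M. - f y \<le> - x} = ?Q x"
    by (rule arg_cong[where f = prob]) auto
  have lt: "prob {y \<in> space M. - f y < - x + e} = ?P (x - e)" for e
    by (rule arg_cong[where f = prob]) auto
  have "?P x \<le> ?Q x"
    by (intro finite_measure_mono) auto
  then have Q: "0 < ?Q x" "?Q x < 1" "min (?Q x) (1 - ?Q x) = ?Q x"
    using pos half by auto
  have "let p = prob {y \<in> space M. - f y \<le> - x} in 0 < p \<and> p < 1 \<longrightarrow>
      (\<forall>\<^sub>F e in at_right 0. h * min p (1 - p) * e < prob {y \<in> space M. - f y < - x + e} - p)"
    using expansion unfolding halfline_expansion_def by blast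
  then have "\<forall>\<^sub>F e in at_right 0. h * ?Q x * e < ?P (x - e) - ?Q x"
    using Q unfolding Let_def le lt by simp
  moreover have "\<forall>\<^sub>F e in at_right (0::real). 0 < e"
    by (rule eventually_at_right_less)
  ultimately show ?thesis
  proof eventually_elim
    case (elim e)
    have "?P x * (1 + h * e) \<le> ?Q x * (1 + h * e)"
      using \<open>?P x \<le> ?Q x\<close> h elim(2) by (intro mult_right_mono) auto
    then show ?case
      using elim(1) by (simp add: algebra_simps)
  qed
qed

lemma halfline_expansion_tail:
  assumes [measurable]: "f \<in> borel_measurable M" and h: "0 < h"
    and upper: "halfline_expansion M f h" and lower: "halfline_expansion M (\<lambda>y. - f y) h"
    and half: "prob {y \<in> space M. a \<le> f y} \<le> 1/2" and r: "0 \<le> r"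
  shows "prob {y \<in> space M. a + r < f y} \<le> 1/2 * exp (- (h / 2 * r))"
proof -
  let ?P = "\<lambda>s. prob {y \<in> space M. s < f y}"
  have half_above: "prob {y \<in> space M. x \<le> f y} \<le> 1/2" if "a \<le> x" for x
  proof -
    have "prob {y \<in> space M. x \<le> f y} \<le> prob {y \<in> space M. a \<le> f y}"
      using that by (intro finite_measure_mono) auto
    then show ?thesis
      using half by linarith
  qed
  have "?P (a + r) * exp (h / 2 * (a + r - a)) \<le> ?P a"
  proof (rule exp_decay_of_local_decay[where h = h])
    show "?P t \<le> ?P s" if "s \<le> t" for s t
      using that by (intro finite_measure_mono) auto
    show "\<forall>\<^sub>F e in at_right 0. ?P (x + e) \<le> ?P x * (1 - h * e)" if "a \<le> x" "0 < ?P x" for x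
      using halfline_expansion_upper_decay[OF _ upper that(2) half_above[OF that(1)]] by simp
    show "\<forall>\<^sub>F e in at_right 0. ?P x * (1 + h * e) \<le> ?P (x - e)" if "a \<le> x" "0 < ?P x" for x
      using halfline_expansion_lower_growth[OF _ lower _ that(2) half_above[OF that(1)]] h by simp
  qed (use h r in auto)
  moreover have "?P a \<le> 1/2"
    using half_above[of a] finite_measure_mono[of "{y \<in> space M. a < f y}" "{y \<in> space M. a \<le> f y}"]
    by force
  ultimately show ?thesis
    by (simp add: exp_minus field_simps)
qed

lemma median_exists:
  fixes f :: "'a \<Rightarrow> real"
  assumes [measurable]: "f \<in> borel_measurable M"
  shows "\<exists>m. prob {x \<in> space M. m < f x} \<le> 1/2 \<and> prob {x \<in> space M. f x < m} \<le> 1/2"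
proof -
  let ?D = "distr M (borel :: real measure) f"
  interpret D: real_distribution ?D
    by simp
  obtain m where "1/2 \<le> cdf ?D m" and lower: "measure ?D {..<m} \<le> 1/2"
    using D.cdf_quantile_exists[of "1/2"] by auto
  moreover have "cdf ?D m = prob {x \<in> space M. f x \<le> m}"
    by (simp add: cdf_def measure_distr vimage_def Int_def conj_commute)
  moreover have "{x \<in> space M. f x \<le> m} = space M - {x \<in> space M. m < f x}"
    by auto
  moreover have "measure ?D {..<m} = prob {x \<in> space M. f x < m}"
    by (simp add: measure_distr vimage_def Int_def conj_commute)
  ultimately show ?thesis
    by (auto simp: prob_compl)
qed

lemma halfline_expansion_concentration:
  assumes [measurable]: "f \<in> borel_measurable M" and h: "0 < h"
    and upper: "halfline_expansion M f h" and lower: "halfline_expansion M (\<lambda>y. - f y) h"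
    and median: "prob {y \<in> space M. m < f y} \<le> 1/2" "prob {y \<in> space M. f y < m} \<le> 1/2"
    and r: "0 \<le> r"
  shows "prob {y \<in> space M. 1/4 + r < \<bar>f y - m\<bar>} \<le> exp (- (h / 2 * r))"
proof -
  have "prob {y \<in> space M. m + 1/4 \<le> f y} \<le> prob {y \<in> space M. m < f y}"
    by (intro finite_measure_mono) auto
  then have "prob {y \<in> space M. m + 1/4 + r < f y} \<le> 1/2 * exp (- (h / 2 * r))"
    using median(1) by (intro halfline_expansion_tail[OF _ h upper lower _ r]) auto
  moreover have "prob {y \<in> space M. - m + 1/4 \<le> - f y} \<le> prob {y \<in> space M. f y < m}"
    by (intro finite_measure_mono) auto
  then have "prob {y \<in> space M. - m + 1/4 + r < - f y} \<le> 1/2 * exp (- (h / 2 * r))"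
    using median(2) halfline_expansion_tail[of "\<lambda>y. - f y" h "- m + 1/4" r] h upper lower r
    by simp
  moreover have "prob {y \<in> space M. 1/4 + r < \<bar>f y - m\<bar>} \<le>
      prob {y \<in> space M. m + 1/4 + r < f y} + prob {y \<in> space M. - m + 1/4 + r < - f y}"
    by (rule order_trans[OF finite_measure_mono measure_Un_le]) auto
  ultimately show ?thesis
    by simp
qed

lemma second_moment_le_of_exp_tail:
  assumes [measurable]: "Y \<in> borel_measurable M" and nonneg: "\<And>x. x \<in> space M \<Longrightarrow> 0 \<le> Y x"
    and int: "integrable M (\<lambda>x. (Y x)\<^sup>2)"
    and tail: "\<And>r. 0 \<le> r \<Longrightarrow> prob {x \<in> space M. 1/4 + r < Y x} \<le> exp (- (40 * r))"
  shows "expectation (\<lambda>x. (Y x)\<^sup>2) \<le> 1/2"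
proof -
  define c where "c j = (real j + 2)\<^sup>2 / 4" for j :: nat
  define B where "B j = {x \<in> space M. (real j + 1) / 2 < Y x}" for j :: nat
  have [measurable]: "B j \<in> sets M" for j
    unfolding B_def by measurable
  have layer: "ennreal (c j) * emeasure M (B j) \<le> ennreal (exp (-10) * (1/2) ^ j)" for j
  proof -
    have "c j * prob (B j) \<le> c j * exp (- (40 * ((real j + 1) / 2 - 1/4)))"
      using tail[of "(real j + 1) / 2 - 1/4"] by (intro mult_left_mono) (auto simp: B_def c_def)
    also have "\<dots> \<le> exp (-10) * (1/2) ^ j"
      unfolding c_def by (rule layer_weight_le)
    finally show ?thesis
      by (simp add: emeasure_eq_measure c_def ennreal_mult[symmetric])
  qed
  have "ennreal (expectation (\<lambda>x. (Y x)\<^sup>2)) = (\<integral>\<^sup>+x. ennreal ((Y x)\<^sup>2) \<partial>M)"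
    by (rule nn_integral_eq_integral[symmetric, OF int]) auto
  also have "\<dots> \<le> (\<integral>\<^sup>+x. ennreal (1/4) + (\<Sum>j. ennreal (c j) * indicator (B j) x) \<partial>M)"
    using square_le_layer_sum[OF nonneg] by (intro nn_integral_mono) (simp add: B_def c_def indicator_def)
  also have "\<dots> = ennreal (1/4) + (\<Sum>j. ennreal (c j) * emeasure M (B j))"
    by (simp add: nn_integral_add nn_integral_suminf nn_integral_cmult_indicator emeasure_space_1)
  also have "\<dots> \<le> ennreal (1/4) + (\<Sum>j. ennreal (exp (-10) * (1/2) ^ j))"
    using layer by (intro add_left_mono suminf_le) auto
  also have "(\<Sum>j. ennreal (exp (-10) * (1/2) ^ j)) = ennreal (\<Sum>j. exp (-10) * (1/2) ^ j)"
    by (intro suminf_ennreal2 summable_mult summable_geometric) auto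
  also have "(\<Sum>j. exp (-10) * (1/2::real) ^ j) = exp (-10) * 2"
    by (simp add: suminf_mult suminf_geometric summable_geometric)
  also have "ennreal (1/4) + ennreal (exp (-10) * 2) \<le> ennreal (1/4) + ennreal (1/4)"
    using exp_ge_add_one_self[of 10] by (intro add_left_mono ennreal_leI) (simp add: exp_minus field_simps)
  finally have "ennreal (expectation (\<lambda>x. (Y x)\<^sup>2)) \<le> ennreal (1/2)"
    by (simp add: ennreal_plus[symmetric] del: ennreal_plus)
  then show ?thesis
    by (rule ennreal_le_iff[THEN iffD1, rotated]) simp
qed

end

section \<open>Cheeger and KLS constants\<close>

lemma abs_component_le_edist:
  assumes "j < n"
  shows "\<bar>x j - y j\<bar> \<le> edist n x y"
proof -
  have "(x j - y j)\<^sup>2 \<le> (\<Sum>i<n. (x i - y i)\<^sup>2)"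
    using assms by (intro member_le_sum) auto
  then show ?thesis
    unfolding edist_def using real_sqrt_le_mono by fastforce
qed

lemma enbhd_halfspace:
  assumes j: "j < n" and \<sigma>: "\<bar>\<sigma>\<bar> = 1" and e: "0 < e"
  shows "enbhd n {x \<in> space (Rn n). \<sigma> * x j \<le> s} e = {x \<in> space (Rn n). \<sigma> * x j < s + e}"
proof (intro equalityI subsetI)
  fix x
  assume "x \<in> enbhd n {x \<in> space (Rn n). \<sigma> * x j \<le> s} e"
  then obtain y where x: "x \<in> space (Rn n)" and y: "\<sigma> * y j \<le> s" and "edist n x y < e"
    unfolding enbhd_def by blast
  then have "\<bar>\<sigma> * x j - \<sigma> * y j\<bar> < e"
    using abs_component_le_edist[OF j, of x y] \<sigma> by (simp add: abs_mult flip: right_diff_distrib)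
  then show "x \<in> {x \<in> space (Rn n). \<sigma> * x j < s + e}"
    using x y by auto
next
  fix x
  assume "x \<in> {x \<in> space (Rn n). \<sigma> * x j < s + e}"
  then have x: "x \<in> space (Rn n)" and lt: "\<sigma> * x j < s + e"
    by auto
  have \<sigma>\<sigma>: "\<sigma> * \<sigma> = 1"
    using \<sigma> by (metis abs_mult_self_eq mult_1_right)
  define t where "t = max 0 (\<sigma> * x j - s)"
  define y where "y = x(j := x j - \<sigma> * t)"
  have "y \<in> space (Rn n)"
    using x j by (auto simp: y_def space_Rn PiE_iff extensional_def)
  moreover have "\<sigma> * y j \<le> s"
    by (simp add: y_def t_def right_diff_distrib mult.assoc[symmetric] \<sigma>\<sigma>)
  moreover have "edist n x y = t"
  proof -
    have "(\<Sum>i<n. (x i - y i)\<^sup>2) = (\<Sum>i<n. if i = j then t\<^sup>2 else 0)"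
      by (rule sum.cong) (auto simp: y_def power2_eq_square mult.assoc[symmetric] \<sigma>\<sigma>)
    then show ?thesis
      using j by (simp add: edist_def t_def)
  qed
  ultimately show "x \<in> enbhd n {x \<in> space (Rn n). \<sigma> * x j \<le> s} e"
    unfolding enbhd_def using x lt e by (auto simp: t_def)
qed

lemma measurable_ident_Rn: "(\<lambda>x. x) \<in> Rn n \<rightarrow>\<^sub>M (borel :: (nat \<Rightarrow> real) measure)"
proof (rule measurable_coordinatewise_then_product)
  fix i :: nat
  show "(\<lambda>x. x i) \<in> borel_measurable (Rn n)"
  proof (cases "i < n")
    case True
    then show ?thesis
      by (rule measurable_component_Rn[OF refl])
  next
    case False
    then have "(\<lambda>x. x i) \<in> borel_measurable (Rn n) \<longleftrightarrow> (\<lambda>x. undefined :: real) \<in> borel_measurable (Rn n)"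
      by (intro measurable_cong) (auto simp: space_Rn PiE_def extensional_def)
    then show ?thesis
      by simp
  qed
qed

lemma sets_enbhd: "enbhd n A e \<in> sets (Rn n)"
proof -
  have "open {x. edist n x a < e}" for a
    unfolding edist_def
    by (intro open_Collect_less continuous_intros continuous_on_product_coordinates)
  then have "open (\<Union>a\<in>A. {x. edist n x a < e})"
    by blast
  then have "(\<lambda>x. x) -` (\<Union>a\<in>A. {x. edist n x a < e}) \<inter> space (Rn n) \<in> sets (Rn n)"
    using measurable_ident_Rn by (intro measurable_sets) auto
  moreover have "enbhd n A e = (\<lambda>x. x) -` (\<Union>a\<in>A. {x. edist n x a < e}) \<inter> space (Rn n)"
    unfolding enbhd_def by auto
  ultimately show ?thesis
    by simp
qed

lemma boundary_measure_nonneg: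
  assumes sets: "sets \<mu> = sets (Rn n)" and "finite_measure \<mu>" and A: "A \<subseteq> space (Rn n)"
  shows "0 \<le> boundary_measure n \<mu> A"
  unfolding boundary_measure_def le_Liminf_iff
proof (intro allI impI)
  fix y :: ereal
  assume "y < 0"
  have "A \<subseteq> enbhd n A e" if "0 < e" for e
    using A that by (force simp: enbhd_def edist_def)
  then have mono: "measure \<mu> A \<le> measure \<mu> (enbhd n A e)" if "0 < e" for e
    using that assms sets_enbhd by (intro finite_measure.finite_measure_mono) auto
  have "\<forall>\<^sub>F e in at_right 0. 0 \<le> (measure \<mu> (enbhd n A e) - measure \<mu> A) / e"
    using eventually_at_right_less[of "0::real"] by (rule eventually_mono) (simp add: mono)
  then show "\<forall>\<^sub>F e in at_right 0. y < ereal ((measure \<mu> (enbhd n A e) - measure \<mu> A) / e)"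
    by (rule eventually_mono) (use \<open>y < 0\<close> in \<open>auto intro: less_le_trans\<close>)
qed

lemma cheeger_nonneg:
  assumes sets: "sets \<mu> = sets (Rn n)" and "finite_measure \<mu>"
  shows "0 \<le> cheeger n \<mu>"
  unfolding cheeger_def
proof (rule INF_greatest)
  fix A
  assume A: "A \<in> {A \<in> sets \<mu>. 0 < measure \<mu> A \<and> measure \<mu> A < 1}"
  then have "A \<subseteq> space (Rn n)"
    using sets.sets_into_space sets_eq_imp_space_eq[OF sets] by auto
  then have "0 \<le> boundary_measure n \<mu> A"
    by (rule boundary_measure_nonneg[OF assms])
  then show "0 \<le> boundary_measure n \<mu> A / ereal (min (measure \<mu> A) (1 - measure \<mu> A))"
    using A by (simp add: ereal_le_divide_pos)
qed

lemma cheeger_gt_imp_halfline_expansion: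
  assumes sets: "sets \<mu> = sets (Rn n)" and j: "j < n" and \<sigma>: "\<bar>\<sigma>\<bar> = 1"
    and gt: "ereal h < cheeger n \<mu>"
  shows "halfline_expansion \<mu> (\<lambda>x. \<sigma> * x j) h"
  unfolding halfline_expansion_def Let_def
proof (intro allI impI)
  fix s
  define A where "A = {x \<in> space \<mu>. \<sigma> * x j \<le> s}"
  let ?p = "measure \<mu> A"
  define m where "m = min ?p (1 - ?p)"
  assume "0 < measure \<mu> {x \<in> space \<mu>. \<sigma> * x j \<le> s} \<and> measure \<mu> {x \<in> space \<mu>. \<sigma> * x j \<le> s} < 1"
  then have p: "0 < ?p" "?p < 1"
    by (auto simp: A_def)
  then have "0 < m"
    by (simp add: m_def)
  have "A \<in> sets \<mu>"
    using measurable_component_Rn[OF sets j] unfolding A_def by measurable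
  then have "cheeger n \<mu> \<le> boundary_measure n \<mu> A / ereal m"
    unfolding cheeger_def m_def using p by (intro INF_lower) auto
  with gt have "ereal h < boundary_measure n \<mu> A / ereal m"
    by (rule less_le_trans)
  then have "ereal m * ereal h < boundary_measure n \<mu> A"
    using \<open>0 < m\<close> by (subst (asm) ereal_less_divide_pos) auto
  then have "\<forall>\<^sub>F e in at_right 0. ereal (m * h) < ereal ((measure \<mu> (enbhd n A e) - ?p) / e)"
    unfolding boundary_measure_def by (intro less_LiminfD) simp
  moreover have "\<forall>\<^sub>F e in at_right (0::real). 0 < e"
    by (rule eventually_at_right_less)
  ultimately show "\<forall>\<^sub>F e in at_right 0.
      h * min (measure \<mu> {x \<in> space \<mu>. \<sigma> * x j \<le> s}) (1 - measure \<mu> {x \<in> space \<mu>. \<sigma> * x j \<le> s}) * e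
      < measure \<mu> {x \<in> space \<mu>. \<sigma> * x j < s + e} - measure \<mu> {x \<in> space \<mu>. \<sigma> * x j \<le> s}"
  proof eventually_elim
    case (elim e)
    have "enbhd n A e = {x \<in> space \<mu>. \<sigma> * x j < s + e}"
      using enbhd_halfspace[OF j \<sigma> elim(2)] sets_eq_imp_space_eq[OF sets] by (simp add: A_def)
    then show ?case
      using elim by (simp add: A_def m_def pos_less_divide_eq mult.commute mult.left_commute)
  qed
qed

lemma isotropic_shifted_second_moment:
  assumes "prob_space \<mu>" and iso: "isotropic n \<mu>" and i: "i < n"
  shows "integrable \<mu> (\<lambda>x. (x i - m)\<^sup>2)" and "(\<integral>x. (x i - m)\<^sup>2 \<partial>\<mu>) = 1 + m\<^sup>2"
proof -
  interpret prob_space \<mu>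
    by fact
  have sq: "(x i - m)\<^sup>2 = x i * x i - 2 * m * x i + m\<^sup>2" for x :: "nat \<Rightarrow> real"
    by (simp add: power2_eq_square algebra_simps)
  have "integrable \<mu> (\<lambda>x. x i)" "expectation (\<lambda>x. x i) = 0"
    "integrable \<mu> (\<lambda>x. x i * x i)" "expectation (\<lambda>x. x i * x i) = 1"
    using iso i unfolding isotropic_def by auto
  then show "integrable \<mu> (\<lambda>x. (x i - m)\<^sup>2)" and "(\<integral>x. (x i - m)\<^sup>2 \<partial>\<mu>) = 1 + m\<^sup>2"
    unfolding sq by (simp_all add: prob_space)
qed

lemma cheeger_le_80:
  assumes "0 < n" and sets: "sets \<mu> = sets (Rn n)" and "prob_space \<mu>" and iso: "isotropic n \<mu>"
  shows "cheeger n \<mu> \<le> 80"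
proof (rule ccontr)
  interpret prob_space \<mu>
    by fact
  assume "\<not> cheeger n \<mu> \<le> 80"
  then have gt: "ereal 80 < cheeger n \<mu>"
    by simp
  have coord [measurable]: "(\<lambda>x. x 0) \<in> borel_measurable \<mu>"
    using measurable_component_Rn[OF sets \<open>0 < n\<close>] .
  have upper: "halfline_expansion \<mu> (\<lambda>x. x 0) 80"
    using cheeger_gt_imp_halfline_expansion[OF sets \<open>0 < n\<close> _ gt, of 1] by simp
  have lower: "halfline_expansion \<mu> (\<lambda>x. - x 0) 80"
    using cheeger_gt_imp_halfline_expansion[OF sets \<open>0 < n\<close> _ gt, of "-1"] by simp
  obtain m where median: "prob {x \<in> space \<mu>. m < x 0} \<le> 1/2" "prob {x \<in> space \<mu>. x 0 < m} \<le> 1/2"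
    using median_exists[OF coord] by blast
  have "expectation (\<lambda>x. \<bar>x 0 - m\<bar>\<^sup>2) \<le> 1/2"
  proof (rule second_moment_le_of_exp_tail)
    show "integrable \<mu> (\<lambda>x. \<bar>x 0 - m\<bar>\<^sup>2)"
      using isotropic_shifted_second_moment(1)[OF \<open>prob_space \<mu>\<close> iso \<open>0 < n\<close>] by simp
    show "prob {x \<in> space \<mu>. 1/4 + r < \<bar>x 0 - m\<bar>} \<le> exp (- (40 * r))" if "0 \<le> r" for r
      using halfline_expansion_concentration[OF _ _ upper lower median that] by simp
  qed auto
  moreover have "expectation (\<lambda>x. \<bar>x 0 - m\<bar>\<^sup>2) = 1 + m\<^sup>2"
    using isotropic_shifted_second_moment(2)[OF \<open>prob_space \<mu>\<close> iso \<open>0 < n\<close>] by simp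
  ultimately show False
    using zero_le_power2[of m] by linarith
qed

lemma cheeger_Rn_0:
  assumes sets: "sets \<mu> = sets (Rn 0)" and "prob_space \<mu>"
  shows "cheeger 0 \<mu> = \<infinity>"
proof -
  interpret prob_space \<mu>
    by fact
  have "space \<mu> = {\<lambda>_. undefined}"
    using sets_eq_imp_space_eq[OF sets] by (simp add: space_Rn)
  then have trivial: "A = {} \<or> A = space \<mu>" if "A \<in> sets \<mu>" for A
    using sets.sets_into_space[OF that] by auto
  have "prob A = 0 \<or> prob A = 1" if "A \<in> sets \<mu>" for A
    using trivial[OF that] prob_space by auto
  then have no_sets: "{A \<in> sets \<mu>. 0 < prob A \<and> prob A < 1} = {}"
    by force
  show ?thesis
    unfolding cheeger_def no_sets by (simp add: top_ereal_def)
qed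

lemma inverse_cheeger_ge:
  assumes "0 < n" and sets: "sets \<mu> = sets (Rn n)" and ps: "prob_space \<mu>" and iso: "isotropic n \<mu>"
  shows "ereal (1/80) \<le> 1 / cheeger n \<mu>"
proof -
  have "0 \<le> cheeger n \<mu>"
    using cheeger_nonneg[OF sets prob_space.axioms(1)[OF ps]] .
  moreover have "cheeger n \<mu> \<le> 80"
    using cheeger_le_80[OF \<open>0 < n\<close> sets ps iso] .
  ultimately obtain r where r: "cheeger n \<mu> = ereal r" "0 \<le> r" "r \<le> 80"
    by (cases "cheeger n \<mu>") auto
  show ?thesis
  proof (cases "r = 0")
    case False
    with r have "1/80 \<le> 1 / r"
      by (simp add: field_simps)
    with False show ?thesis
      by (simp add: r divide_ereal_def inverse_eq_divide)
  qed (simp add: r divide_ereal_def)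
qed

lemma psi_eq_0_or_ge: "psi n = 0 \<or> 1/80 \<le> psi n"
proof -
  let ?I = "{\<mu>. log_concave n \<mu> \<and> isotropic n \<mu>}"
  consider "?I = {}" | "n = 0" "?I \<noteq> {}" | "0 < n" "?I \<noteq> {}"
    by blast
  then show ?thesis
  proof cases
    case 1
    then show ?thesis
      unfolding psi_def KLS_def 1 by (simp add: bot_ereal_def)
  next
    case 2
    have "1 / cheeger n \<mu> = 0" if "\<mu> \<in> ?I" for \<mu>
      using that cheeger_Rn_0 2(1) by (simp add: log_concave_def)
    then have "KLS n = (SUP \<mu>\<in>?I. 0)"
      unfolding KLS_def by (intro SUP_cong) auto
    also have "\<dots> = 0"
      using 2(2) by simp
    finally show ?thesis
      by (simp add: psi_def)
  next
    case 3
    then obtain \<mu> where "\<mu> \<in> ?I"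
      by blast
    then have "ereal (1/80) \<le> KLS n"
      unfolding KLS_def
      using inverse_cheeger_ge[OF 3(1) sets_log_concave log_concave_prob_space]
      by (blast intro: SUP_upper2)
    then show ?thesis
      by (cases "KLS n") (auto simp: psi_def)
  qed
qed

theorem corollary1p9:
  "\<exists>c>0. \<forall>n \<mu> N t.
     log_concave n \<mu> \<and> symmetric_measure n \<mu> \<and> seminorm_on n N \<and> t > 0 \<longrightarrow>
     measure \<mu> {x \<in> space \<mu>. \<bar>N x - (\<integral>y. N y \<partial>\<mu>)\<bar> > t}
       \<le> 2 * exp (- (c / psi n) * (t / (\<integral>y. N y \<partial>\<mu>)))"
proof (intro exI[of _ "1/2000"] conjI allI impI)
  fix n \<mu> N and t :: real
  assume "log_concave n \<mu> \<and> symmetric_measure n \<mu> \<and> seminorm_on n N \<and> t > 0"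
  then have lc: "log_concave n \<mu>" and seminorm: "seminorm_on n N" and t: "0 < t"
    by auto
  have "0 \<le> 1/2000 / psi n" "1/2000 / psi n \<le> 1/25"
    using psi_eq_0_or_ge[of n] by (auto simp: divide_simps)
  then show "measure \<mu> {x \<in> space \<mu>. \<bar>N x - (\<integral>y. N y \<partial>\<mu>)\<bar> > t}
      \<le> 2 * exp (- (1/2000 / psi n) * (t / (\<integral>y. N y \<partial>\<mu>)))"
    by (rule seminorm_deviation_tail[OF lc seminorm t])
qed simp

end
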